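(* Let $H$ be a complex Hilbert space, let $P \in \mathcal{L}(H)$ be a positive operator (i.e. $\langle Px,x\rangle \ge 0$ for all $x\in H$), and let $(p_n)$ be a sequence of polynomials with positive coefficients such that $p_n(P) \to S$ in the operator norm of $\mathcal{L}(H)$, for some $S \in \mathcal{L}(H)$. If $P$ satisfies the property $\mathcal{N}$, then $S$ satisfies the property $\mathcal{N}$.
   Context: $\mathcal{L}(H)$ is the Banach algebra of bounded linear operators on $H$ with the operator norm; for a polynomial $p(t) = \sum_{k=0}^m \alpha_k t^k$, $p(P) = \sum_{k=0}^m \alpha_k P^k$ with $P^0 = I$. An operator $T \in \mathcal{L}(H)$ satisfies the property $\mathcal{N}$ if there exists $x_0 \in H$ with $\|x_0\|=1$ and $\|Tx_0\| = \|T\|$. *)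

theory Defs
  imports "HOL-Analysis.Analysis" "HOL-Computational_Algebra.Polynomial"
begin

class complex_inner = real_normed_vector +
  fixes scaleC :: "complex \<Rightarrow> 'a \<Rightarrow> 'a" (infixr "*\<^sub>C" 75)
    and cinner :: "'a \<Rightarrow> 'a \<Rightarrow> complex"
  assumes scaleC_add_right: "a *\<^sub>C (x + y) = a *\<^sub>C x + a *\<^sub>C y"
    and scaleC_add_left: "(a + b) *\<^sub>C x = a *\<^sub>C x + b *\<^sub>C x"
    and scaleC_scaleC: "a *\<^sub>C (b *\<^sub>C x) = (a * b) *\<^sub>C x"
    and scaleC_one: "1 *\<^sub>C x = x"
    and scaleR_scaleC: "r *\<^sub>R x = complex_of_real r *\<^sub>C x"
    and cinner_add_left: "cinner (x + y) z = cinner x z + cinner y z"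
    and cinner_scaleC_left: "cinner (a *\<^sub>C x) y = a * cinner x y"
    and cinner_commute: "cinner x y = cnj (cinner y x)"
    and cinner_self_Im: "Im (cinner x x) = 0"
    and cinner_self_Re_nonneg: "0 \<le> Re (cinner x x)"
    and cinner_self_eq_0: "cinner x x = 0 \<longleftrightarrow> x = 0"
    and norm_cinner: "norm x = sqrt (Re (cinner x x))"

class chilbert = complex_inner + complete_space

definition bounded_clinear_op :: "('a::complex_inner \<Rightarrow> 'a) \<Rightarrow> bool" where
  "bounded_clinear_op T \<longleftrightarrow> bounded_linear T \<and> (\<forall>c x. T (c *\<^sub>C x) = c *\<^sub>C T x)"

definition positive_op :: "('a::complex_inner \<Rightarrow> 'a) \<Rightarrow> bool" where
  "positive_op P \<longleftrightarrow> (\<forall>x. Im (cinner (P x) x) = 0 \<and> 0 \<le> Re (cinner (P x) x))"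

definition poly_op :: "real poly \<Rightarrow> ('a::complex_inner \<Rightarrow> 'a) \<Rightarrow> 'a \<Rightarrow> 'a" where
  "poly_op p P x = (\<Sum>k\<le>degree p. coeff p k *\<^sub>R (P ^^ k) x)"

definition property_N :: "('a::complex_inner \<Rightarrow> 'a) \<Rightarrow> bool" where
  "property_N T \<longleftrightarrow> (\<exists>x0. norm x0 = 1 \<and> norm (T x0) = onorm T)"

end

theory Submission imports Defs begin

text \<open>If the positive operator \<open>P\<close> attains its norm at a unit vector \<open>u\<close>, then \<open>u\<close> is an
  eigenvector of \<open>P\<close> for the eigenvalue \<open>\<parallel>P\<parallel>\<close>. Hence \<open>p\<^sub>n(P) u = p\<^sub>n(\<parallel>P\<parallel>) u\<close>, while
  positivity of the coefficients gives \<open>\<parallel>p\<^sub>n(P)\<parallel> \<le> p\<^sub>n(\<parallel>P\<parallel>)\<close>: every \<open>p\<^sub>n(P)\<close> attains its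
  norm at the same vector \<open>u\<close>. Attaining the norm at a fixed vector is preserved by limits in
  operator norm, so \<open>S\<close> attains its norm at \<open>u\<close> as well.\<close>

lemma cinner_zero_left [simp]: "cinner (0::'a::complex_inner) y = 0"
  using cinner_add_left[of "0::'a" 0 y] by simp

lemma cinner_add_right: "cinner (x::'a::complex_inner) (y + z) = cinner x y + cinner x z"
  by (metis cinner_commute cinner_add_left complex_cnj_add)

lemma cinner_scaleC_right: "cinner (x::'a::complex_inner) (a *\<^sub>C y) = cnj a * cinner x y"
  by (metis cinner_commute cinner_scaleC_left complex_cnj_mult)

lemma cinner_scaleR_left: "cinner (r *\<^sub>R (x::'a::complex_inner)) y = of_real r * cinner x y"
  by (simp add: scaleR_scaleC cinner_scaleC_left)

lemma cinner_scaleR_right: "cinner (x::'a::complex_inner) (r *\<^sub>R y) = of_real r * cinner x y"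
  by (simp add: scaleR_scaleC cinner_scaleC_right)

lemma power2_norm_eq_Re_cinner: "(norm (x::'a::complex_inner))\<^sup>2 = Re (cinner x x)"
  by (simp add: norm_cinner cinner_self_Re_nonneg)

lemma Re_cinner_commute: "Re (cinner (x::'a::complex_inner) y) = Re (cinner y x)"
  by (subst cinner_commute) simp

lemma Re_cinner_linear_combination:
  fixes f :: "'a::complex_inner \<Rightarrow> 'a"
  assumes "linear f"
  shows "Re (cinner (f (a *\<^sub>R x + b *\<^sub>R y)) (a *\<^sub>R x + b *\<^sub>R y)) =
    a\<^sup>2 * Re (cinner (f x) x) + a * b * (Re (cinner (f x) y) + Re (cinner (f y) x))
      + b\<^sup>2 * Re (cinner (f y) y)"
  using assms
  by (simp add: linear_add linear_scale cinner_add_left cinner_add_right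
      cinner_scaleR_left cinner_scaleR_right power2_eq_square algebra_simps)

lemma Re_cinner_le_norm_mult: "Re (cinner (u::'a::complex_inner) v) \<le> norm u * norm v"
proof (cases "u = 0 \<or> v = 0")
  case True
  then show ?thesis by (metis Re_cinner_commute cinner_zero_left mult_eq_0_iff norm_zero order_refl zero_complex.sel(1))
next
  case False
  then have pos: "norm u * norm v > 0" by simp
  have "0 \<le> Re (cinner (id (norm v *\<^sub>R u + (- norm u) *\<^sub>R v)) (norm v *\<^sub>R u + (- norm u) *\<^sub>R v))"
    by (simp add: cinner_self_Re_nonneg)
  also have "\<dots> = (norm v)\<^sup>2 * (norm u)\<^sup>2 - 2 * (norm u * norm v) * Re (cinner u v)
      + (norm u)\<^sup>2 * (norm v)\<^sup>2"
    by (subst Re_cinner_linear_combination)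
      (auto simp: linear_id power2_norm_eq_Re_cinner Re_cinner_commute[of v u])
  finally have "(norm u * norm v) * Re (cinner u v) \<le> (norm u * norm v) * (norm u * norm v)"
    by (simp add: power2_eq_square algebra_simps)
  with pos show ?thesis by (metis mult_le_cancel_left_pos)
qed

text \<open>Complex linearity is essential here: the imaginary part of the form at \<open>x + i y\<close>
  is what relates \<open>\<langle>Px, y\<rangle>\<close> to \<open>\<langle>Py, x\<rangle>\<close>.\<close>

lemma positive_op_Re_cinner_commute:
  fixes P :: "'a::complex_inner \<Rightarrow> 'a"
  assumes "bounded_clinear_op P" "positive_op P"
  shows "Re (cinner (P x) y) = Re (cinner (P y) x)"
proof -
  have lin: "linear P" and clin: "\<And>c x. P (c *\<^sub>C x) = c *\<^sub>C P x"
    using assms(1) by (auto simp: bounded_clinear_op_def bounded_linear.linear)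
  have "cinner (P (x + \<i> *\<^sub>C y)) (x + \<i> *\<^sub>C y) =
      cinner (P x) x - \<i> * cinner (P x) y + \<i> * cinner (P y) x + cinner (P y) y"
    by (simp add: linear_add[OF lin] clin cinner_add_left cinner_add_right
        cinner_scaleC_right cinner_scaleC_left algebra_simps)
  moreover have "Im (cinner (P (x + \<i> *\<^sub>C y)) (x + \<i> *\<^sub>C y)) = 0"
    and "Im (cinner (P x) x) = 0" "Im (cinner (P y) y) = 0"
    using assms(2) by (auto simp: positive_op_def)
  ultimately show ?thesis by simp
qed

text \<open>With \<open>l = \<parallel>P\<parallel>\<close> and \<open>m = Re \<langle>Pu, u\<rangle>\<close>, positivity at \<open>l u - Pu\<close> forces \<open>m \<ge> l\<close>,
  and then \<open>\<parallel>Pu - l u\<parallel>\<^sup>2 = 2 l (l - m) \<le> 0\<close>.\<close>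

lemma positive_op_norm_attained_eigenvector:
  fixes P :: "'a::complex_inner \<Rightarrow> 'a"
  assumes clin: "bounded_clinear_op P" and pos: "positive_op P"
    and u: "norm u = 1" and attained: "norm (P u) = onorm P"
  shows "P u = onorm P *\<^sub>R u"
proof -
  have bl: "bounded_linear P" using clin by (simp add: bounded_clinear_op_def)
  then have lin: "linear P" by (simp add: bounded_linear.linear)
  define l where "l = onorm P"
  define m where "m = Re (cinner (P u) u)"
  have "0 \<le> l" unfolding l_def by (rule onorm_pos_le[OF bl])
  show ?thesis
  proof (cases "l = 0")
    case True
    then show ?thesis using attained l_def by simp
  next
    case False
    with \<open>0 \<le> l\<close> have "l > 0" by simp
    have norm_Pu: "norm (P u) = l" using attained by (simp add: l_def)
    have PPu: "Re (cinner (P (P u)) (P u)) \<le> l ^ 3"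
    proof -
      have "Re (cinner (P (P u)) (P u)) \<le> norm (P (P u)) * norm (P u)"
        by (rule Re_cinner_le_norm_mult)
      also have "\<dots> \<le> (l * norm (P u)) * norm (P u)"
        using onorm[OF bl, of "P u"] by (simp add: l_def mult_right_mono)
      finally show ?thesis using norm_Pu by (simp add: power3_eq_cube)
    qed
    have cross: "Re (cinner (P u) (P u)) = l\<^sup>2" "Re (cinner (P (P u)) u) = l\<^sup>2"
      using norm_Pu positive_op_Re_cinner_commute[OF clin pos, of "P u" u]
      by (simp_all add: power2_norm_eq_Re_cinner[symmetric])
    have "0 \<le> Re (cinner (P (l *\<^sub>R u + (-1) *\<^sub>R P u)) (l *\<^sub>R u + (-1) *\<^sub>R P u))"
      using pos by (simp add: positive_op_def)
    also have "\<dots> = l\<^sup>2 * m - l * (l\<^sup>2 + l\<^sup>2) + Re (cinner (P (P u)) (P u))"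
      by (subst Re_cinner_linear_combination[OF lin]) (simp add: cross m_def)
    finally have "l\<^sup>2 * l \<le> l\<^sup>2 * m"
      using PPu by (simp add: power2_eq_square power3_eq_cube algebra_simps)
    then have "l \<le> m" using \<open>l > 0\<close> by simp
    have "(norm (P u - l *\<^sub>R u))\<^sup>2 = Re (cinner (id (1 *\<^sub>R P u + (-l) *\<^sub>R u)) (1 *\<^sub>R P u + (-l) *\<^sub>R u))"
      by (simp add: power2_norm_eq_Re_cinner)
    also have "\<dots> = l\<^sup>2 - l * (m + m) + l\<^sup>2"
      by (subst Re_cinner_linear_combination[OF linear_id])
        (simp add: power2_norm_eq_Re_cinner[symmetric] norm_Pu u m_def Re_cinner_commute[of u "P u"])
    also have "\<dots> \<le> 0"
      using \<open>l \<le> m\<close> \<open>l > 0\<close> by (simp add: power2_eq_square algebra_simps mult_left_mono)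
    finally have "norm (P u - l *\<^sub>R u) = 0" by simp
    then show ?thesis by (simp add: l_def)
  qed
qed

lemma bounded_linear_funpow:
  "bounded_linear (P::'a::real_normed_vector \<Rightarrow> 'a) \<Longrightarrow> bounded_linear (P ^^ k)"
proof (induction k)
  case 0
  then show ?case using bounded_linear_ident by (simp add: id_def)
next
  case (Suc k)
  then show ?case using bounded_linear_compose[of P "P ^^ k"] by (simp add: o_def)
qed

lemma norm_funpow_le:
  "bounded_linear (P::'a::real_normed_vector \<Rightarrow> 'a) \<Longrightarrow> norm ((P ^^ k) x) \<le> onorm P ^ k * norm x"
proof (induction k)
  case 0
  then show ?case by simp
next
  case (Suc k)
  have "norm ((P ^^ Suc k) x) \<le> onorm P * norm ((P ^^ k) x)"
    using onorm[OF Suc.prems] by simp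
  also have "\<dots> \<le> onorm P * (onorm P ^ k * norm x)"
    by (intro mult_left_mono Suc.IH Suc.prems onorm_pos_le)
  finally show ?case by (simp add: algebra_simps)
qed

lemma funpow_eigenvector:
  "linear (P::'a::real_vector \<Rightarrow> 'a) \<Longrightarrow> P u = l *\<^sub>R u \<Longrightarrow> (P ^^ k) u = l ^ k *\<^sub>R u"
  by (induction k) (simp_all add: linear_scale)

lemma bounded_linear_poly_op:
  assumes "bounded_linear (P::'a::complex_inner \<Rightarrow> 'a)"
  shows "bounded_linear (poly_op p P)"
proof -
  have "bounded_linear (\<lambda>x. coeff p k *\<^sub>R (P ^^ k) x)" for k
    using bounded_linear_compose[OF bounded_linear_scaleR_right bounded_linear_funpow[OF assms]] .
  then show ?thesis
    unfolding poly_op_def[abs_def] by (rule bounded_linear_sum)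
qed

lemma norm_poly_op_le:
  assumes "bounded_linear P" "\<And>k. 0 \<le> coeff p k"
  shows "norm (poly_op p P x) \<le> poly p (onorm P) * norm x"
proof -
  have "norm (poly_op p P x) \<le> (\<Sum>k\<le>degree p. norm (coeff p k *\<^sub>R (P ^^ k) x))"
    unfolding poly_op_def by (rule norm_sum)
  also have "\<dots> \<le> (\<Sum>k\<le>degree p. coeff p k * onorm P ^ k * norm x)"
    by (intro sum_mono) (simp add: assms(2) mult.assoc mult_left_mono norm_funpow_le[OF assms(1)])
  also have "\<dots> = poly p (onorm P) * norm x"
    by (simp add: poly_altdef sum_distrib_right)
  finally show ?thesis .
qed

lemma poly_op_eigenvector:
  assumes "linear (P::'a::complex_inner \<Rightarrow> 'a)" "P u = l *\<^sub>R u"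
  shows "poly_op p P u = poly p l *\<^sub>R u"
  unfolding poly_op_def poly_altdef scaleR_sum_left
  by (intro sum.cong refl) (simp add: funpow_eigenvector[OF assms])

lemma norm_attained_at_limit:
  fixes T :: "nat \<Rightarrow> 'a::real_normed_vector \<Rightarrow> 'b::real_normed_vector"
  assumes "bounded_linear S" "\<And>n. bounded_linear (T n)" and u: "norm u = 1"
    and attained: "\<And>n x. norm (T n x) \<le> norm (T n u) * norm x"
    and lim: "(\<lambda>n. onorm (\<lambda>x. T n x - S x)) \<longlonglongrightarrow> 0"
  shows "norm (S u) = onorm S"
proof -
  define d where "d n = onorm (\<lambda>x. T n x - S x)" for n
  have bl_diff: "bounded_linear (\<lambda>x. T n x - S x)" for n
    by (intro bounded_linear_sub assms)
  have diff_le: "norm (T n x - S x) \<le> d n * norm x" for n x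
    unfolding d_def by (rule onorm[OF bl_diff])
  have "onorm S \<le> norm (S u) + 2 * d n" for n
  proof (rule onorm_bound)
    show "0 \<le> norm (S u) + 2 * d n"
      unfolding d_def using onorm_pos_le[OF bl_diff] by simp
  next
    fix x
    have "norm (T n u) \<le> norm (S u) + d n"
      using norm_triangle_sub[of "T n u" "S u"] diff_le[of n u] u by simp
    then have "norm (T n x) \<le> (norm (S u) + d n) * norm x"
      using attained[of n x] by (meson mult_right_mono norm_ge_zero order_trans)
    then show "norm (S x) \<le> (norm (S u) + 2 * d n) * norm x"
      using norm_triangle_sub[of "S x" "T n x"] diff_le[of n x]
      by (simp add: norm_minus_commute algebra_simps)
  qed
  moreover have "(\<lambda>n. norm (S u) + 2 * d n) \<longlonglongrightarrow> norm (S u) + 2 * 0"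
    unfolding d_def by (intro tendsto_intros lim)
  ultimately have "onorm S \<le> norm (S u)"
    using LIMSEQ_le_const by fastforce
  moreover have "norm (S u) \<le> onorm S"
    using onorm[OF assms(1), of u] u by simp
  ultimately show ?thesis by simp
qed

theorem proposition2p12:
  fixes P S :: "'a::chilbert \<Rightarrow> 'a" and p :: "nat \<Rightarrow> real poly"
  assumes "bounded_clinear_op P" and "positive_op P"
    and "bounded_clinear_op S"
    and "\<And>n k. 0 \<le> coeff (p n) k"
    and "(\<lambda>n. onorm (\<lambda>x. poly_op (p n) P x - S x)) \<longlonglongrightarrow> 0"
    and "property_N P"
  shows "property_N S"
proof -
  have blP: "bounded_linear P" and blS: "bounded_linear S"
    using assms(1,3) by (auto simp: bounded_clinear_op_def)
  obtain u where u: "norm u = 1" and "norm (P u) = onorm P"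
    using assms(6) by (auto simp: property_N_def)
  then have eig: "P u = onorm P *\<^sub>R u"
    by (rule positive_op_norm_attained_eigenvector[OF assms(1,2)])
  have "norm (poly_op (p n) P x) \<le> norm (poly_op (p n) P u) * norm x" for n x
  proof -
    have "norm (poly_op (p n) P x) \<le> poly (p n) (onorm P) * norm x"
      by (rule norm_poly_op_le[OF blP assms(4)])
    also have "\<dots> \<le> norm (poly_op (p n) P u) * norm x"
      using poly_op_eigenvector[OF bounded_linear.linear[OF blP] eig] u
      by (simp add: mult_right_mono)
    finally show ?thesis .
  qed
  then have "norm (S u) = onorm S"
    by (rule norm_attained_at_limit[OF blS bounded_linear_poly_op[OF blP] u _ assms(5)])
  with u show ?thesis unfolding property_N_def by blast
qed

end
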